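(* Let $Q$ be a fixed IPC formula and let $\phi : K \to L$ be the map defined in the context. Then for every PC formula $Z \in K$, $Q \vdash_L \phi(Z)$.
   Context: $K$ is the set of PC formulas: built from propositional variables and a propositional constant $\mathfrak{f}$ using only the conditional $\supset$. $L \subseteq K$ is the set of IPC formulas: built from propositional variables using only $\supset$. IPC has Modus Ponens as its only rule and axioms all instances (with IPC formulas) of $(\#1)\ A \supset (B \supset A)$; $(\#2)\ [A \supset (B \supset C)] \supset [(A \supset B) \supset (A \supset C)]$; $(\mathbb{P})\ [(A \supset B) \supset A] \supset A$. $\Gamma \vdash_L Y$ means there is a deduction of $Y$ from hypotheses $\Gamma$ in IPC. For an IPC formula $Z$ write $QZ := Z \supset Q$ and $QQZ := (Z \supset Q)\supset Q$. The map $\phi : K \to L$ is defined by induction on the number of conditionals: $\phi(\mathfrak{f}) = Q$; $\phi(p) = QQp = (p \supset Q) \supset Q$ for each propositional variable $p$; and $\phi(X \supset Y) = \phi(X) \supset \phi(Y)$. *)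

theory Defs
  imports Main
begin

datatype 'v form = Var 'v | Falsum | Imp "'v form" "'v form" (infixr "\<supset>" 25)

text \<open>IPC formulas (the set L): those without the constant f.\<close>
fun is_ipc :: "'v form \<Rightarrow> bool" where
  "is_ipc (Var p) = True"
| "is_ipc Falsum = False"
| "is_ipc (A \<supset> B) = (is_ipc A \<and> is_ipc B)"

inductive ipc_axiom :: "'v form \<Rightarrow> bool" where
  ax1: "is_ipc A \<Longrightarrow> is_ipc B \<Longrightarrow> ipc_axiom (A \<supset> (B \<supset> A))"
| ax2: "is_ipc A \<Longrightarrow> is_ipc B \<Longrightarrow> is_ipc C \<Longrightarrow>
        ipc_axiom ((A \<supset> (B \<supset> C)) \<supset> ((A \<supset> B) \<supset> (A \<supset> C)))"
| axP: "is_ipc A \<Longrightarrow> is_ipc B \<Longrightarrow> ipc_axiom (((A \<supset> B) \<supset> A) \<supset> A)"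

inductive ipc_deriv :: "'v form set \<Rightarrow> 'v form \<Rightarrow> bool" ("_ \<turnstile>\<^sub>L _" [50, 50] 50)
  for \<Gamma> :: "'v form set" where
  hyp: "Y \<in> \<Gamma> \<Longrightarrow> \<Gamma> \<turnstile>\<^sub>L Y"
| ax: "ipc_axiom Y \<Longrightarrow> \<Gamma> \<turnstile>\<^sub>L Y"
| mp: "\<Gamma> \<turnstile>\<^sub>L X \<Longrightarrow> \<Gamma> \<turnstile>\<^sub>L (X \<supset> Y) \<Longrightarrow> \<Gamma> \<turnstile>\<^sub>L Y"

fun phi :: "'v form \<Rightarrow> 'v form \<Rightarrow> 'v form" where
  "phi Q Falsum = Q"
| "phi Q (Var p) = ((Var p \<supset> Q) \<supset> Q)"
| "phi Q (X \<supset> Y) = (phi Q X \<supset> phi Q Y)"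

end

theory Submission
  imports Defs
begin

text \<open>Every \<open>\<phi>(Z)\<close> is \<open>Q\<close> or an implication whose consequent is again of this
  form. As \<open>Q\<close> is a hypothesis, structural induction with axiom #1 (from \<open>A\<close> infer
  \<open>B \<supset> A\<close>) gives \<open>Q \<turnstile>\<^sub>L \<phi>(Z)\<close>.\<close>

lemma is_ipc_phi: "is_ipc Q \<Longrightarrow> is_ipc (phi Q Z)"
  by (induction Z) auto

lemma ipc_deriv_imp_intro:
  assumes "\<Gamma> \<turnstile>\<^sub>L A" and "is_ipc A" and "is_ipc B"
  shows "\<Gamma> \<turnstile>\<^sub>L (B \<supset> A)"
  using assms(1) ipc_deriv.ax[OF ipc_axiom.ax1[OF assms(2,3)]] by (rule ipc_deriv.mp)

theorem theorem4:
  fixes Q Z :: "'v form"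
  assumes "is_ipc Q"
  shows "{Q} \<turnstile>\<^sub>L phi Q Z"
proof (induction Z)
  case (Var p)
  have "{Q} \<turnstile>\<^sub>L Q" by (rule ipc_deriv.hyp) simp
  then have "{Q} \<turnstile>\<^sub>L ((Var p \<supset> Q) \<supset> Q)"
    by (rule ipc_deriv_imp_intro) (simp_all add: assms)
  then show ?case by simp
next
  case Falsum
  show ?case by (simp add: ipc_deriv.hyp)
next
  case (Imp X Y)
  then have "{Q} \<turnstile>\<^sub>L (phi Q X \<supset> phi Q Y)"
    by (intro ipc_deriv_imp_intro) (simp_all add: is_ipc_phi assms)
  then show ?case by simp
qed

end
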